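(* Let $p$ be a prime and $\alpha\geq 1$, and let $\mathbb F_{p^\alpha}$ be the finite field with $p^\alpha$ elements. Let $A=\{a_1,\ldots,a_m\}$, $B=\{b_1,\ldots,b_n\}$ (with the $a_i$ pairwise distinct and the $b_j$ pairwise distinct) and $S$ be non-empty subsets of $\mathbb F_{p^\alpha}$ with $|S|<p$. Let $h=|S|$ and suppose $m\geq h+3$ and $m+n-h-2\leq p$. Then the set $$(A\oplus_S B)\setminus\{a_1+b_1,\ldots,a_1+b_n\}$$ contains $m-h-2$ pairwise distinct elements $$a_{i_1}+b_{j_1},\ a_{i_2}+b_{j_2},\ \ldots,\ a_{i_{m-h-2}}+b_{j_{m-h-2}}$$ (each with $a_{i_k}-b_{j_k}\notin S$) such that for each $1\leq k\leq m-h-2$, $$i_k\in\{2,3,\ldots,h+2,\ k+h+2\}.$$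
   Context: For subsets $A,B,S$ of an abelian group (here the additive group of $\mathbb F_{p^\alpha}$), $A\oplus_S B:=\{a+b:\ a\in A,\ b\in B,\ a-b\notin S\}$. *)

theory Defs
  imports Main "HOL-Computational_Algebra.Primes"
begin

definition restricted_sumset :: "'a::ab_group_add set \<Rightarrow> 'a set \<Rightarrow> 'a set \<Rightarrow> 'a set" where
  "restricted_sumset A B S = {a + b | a b. a \<in> A \<and> b \<in> B \<and> a - b \<notin> S}"

end

theory Submission
  imports Defs "HOL-Number_Theory.Residues" "HOL-Computational_Algebra.Polynomial"
begin

text \<open>
  Write \<open>h = |S|\<close>, \<open>B = {b\<^sub>1, ..., b\<^sub>n}\<close>, and for \<open>k \<le> m - h - 2\<close> let \<open>F\<^sub>k\<close> be the set of sums
  \<open>a\<^sub>i + b\<^sub>j\<close> with \<open>i \<in> {2, ..., h + 2, k + h + 2}\<close>, \<open>a\<^sub>i - b\<^sub>j \<notin> S\<close> and \<open>a\<^sub>i + b\<^sub>j \<notin> a\<^sub>1 + B\<close>. The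
  theorem asks for distinct representatives of the \<open>F\<^sub>k\<close>, so by Hall's theorem it suffices that
  \<open>(A \<oplus>\<^sub>S B) - (a\<^sub>1 + B)\<close> has at least \<open>r - h - 1\<close> elements whenever \<open>A\<close> has \<open>r \<ge> h + 2\<close> elements
  and \<open>a\<^sub>1 \<notin> A\<close>.

  If it is contained in a set \<open>E\<close> of \<open>r - h - 2\<close> elements, the polynomial
  \<open>\<Prod>\<^sub>s\<^sub>\<in>\<^sub>S (X - Y - s) \<cdot> \<Prod>\<^sub>e\<^sub>\<in>\<^sub>E (X + Y - e) \<cdot> (g(X + Y - a\<^sub>1) - g(Y)) / (X - a\<^sub>1)\<close>, where
  \<open>g = \<Prod>\<^sub>b\<^sub>\<in>\<^sub>B (x - b)\<close>, vanishes on \<open>A \<times> B\<close>. Its top homogeneous part, at \<open>Y = 1\<close>, is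
  \<open>(x - 1)\<^sup>h (x + 1)\<^bsup>r-h-2\<^esup> \<Sum>\<^sub>i\<^sub><\<^sub>n (x + 1)\<^sup>i\<close>, so by the Combinatorial Nullstellensatz its
  coefficients at \<open>x\<^bsup>r-2\<^esup>\<close> and (if \<open>n \<ge> 2\<close>) \<open>x\<^bsup>r-1\<^esup>\<close> vanish. After multiplication by \<open>x\<close> this
  says that \<open>(x - 1)\<^sup>h (x + 1)\<^bsup>r+n-h-2\<^esup>\<close> has two consecutive zero coefficients. In
  characteristic \<open>p\<close> the recurrence for its coefficients spreads these zeros over the whole range
  \<open>[r + n - 1 - p, p)\<close>, which the Frobenius identities \<open>(x \<mp> 1)\<^sup>p = x\<^sup>p \<mp> 1\<close> rule out.
\<close>

lemma CHAR_eq_prime_of_card: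
  assumes "prime p" "card (UNIV :: 'a::{field,finite} set) = p ^ k"
  shows "CHAR('a) = p"
proof -
  have "CHAR('a) > 0" by (simp add: finite_imp_CHAR_pos)
  then have prime_char: "prime CHAR('a)" using prime_CHAR_semidom by blast
  have "CHAR('a) dvd p ^ k" using CHAR_dvd_CARD[where 'a='a] assms(2) by simp
  then have "CHAR('a) dvd p" using prime_char prime_dvd_power by blast
  then show ?thesis using prime_char assms(1) by (simp add: primes_dvd_imp_eq)
qed

lemma of_nat_neq_0_below_CHAR:
  "0 < k \<Longrightarrow> k < CHAR('a::semiring_1) \<Longrightarrow> of_nat k \<noteq> (0::'a)"
  using of_nat_eq_0_iff_char_dvd[where 'a='a, of k] nat_dvd_not_less by blast

lemma degree_coeff_mult_bound:
  fixes p q :: "'a::idom poly"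
  assumes "degree p \<le> m" "degree q \<le> k"
  shows "degree (p * q) \<le> m + k \<and> coeff (p * q) (m + k) = coeff p m * coeff q k"
proof
  show "degree (p * q) \<le> m + k"
    using degree_mult_le[of p q] assms by linarith
  show "coeff (p * q) (m + k) = coeff p m * coeff q k"
  proof (cases "degree p = m \<and> degree q = k")
    case True
    then show ?thesis using coeff_mult_degree_sum[of p q] by simp
  next
    case False
    then have "degree p < m \<or> degree q < k" using assms by auto
    moreover from this have "degree (p * q) < m + k"
      using degree_mult_le[of p q] assms by linarith
    ultimately show ?thesis by (auto simp: coeff_eq_0)
  qed
qed

lemma degree_coeff_prod_bound:
  fixes f :: "'b \<Rightarrow> 'a::idom poly"
  assumes "finite A" "\<And>x. x \<in> A \<Longrightarrow> degree (f x) \<le> d x"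
  shows "degree (prod f A) \<le> sum d A \<and> coeff (prod f A) (sum d A) = (\<Prod>x\<in>A. coeff (f x) (d x))"
  using assms
proof (induction A rule: finite_induct)
  case (insert x F)
  then show ?case
    using degree_coeff_mult_bound[of "f x" "d x" "prod f F" "sum d F"] by simp
qed simp

lemma degree_coeff_power_bound:
  fixes p :: "'a::idom poly"
  assumes "degree p \<le> d"
  shows "degree (p ^ k) \<le> k * d \<and> coeff (p ^ k) (k * d) = coeff p d ^ k"
  using degree_coeff_prod_bound[of "{..<k}" "\<lambda>_. p" "\<lambda>_. d"] assms by (simp add: mult.commute)

lemma poly_eq_sum_upto:
  fixes p :: "'a::comm_semiring_1 poly"
  assumes "degree p \<le> n"
  shows "poly p x = (\<Sum>i\<le>n. coeff p i * x ^ i)"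
  unfolding poly_altdef
  by (rule sum.mono_neutral_left) (use assms in \<open>auto simp: coeff_eq_0\<close>)

definition lagrange_weight :: "'a::field set \<Rightarrow> 'a \<Rightarrow> 'a" where
  "lagrange_weight A a = inverse (\<Prod>a'\<in>A - {a}. a - a')"

lemma sum_lagrange_weight_power:
  fixes A :: "'a::field set"
  assumes fin: "finite A" and i: "i < card A"
  shows "(\<Sum>a\<in>A. lagrange_weight A a * a ^ i) = (if i = card A - 1 then 1 else 0)"
proof -
  define basis where "basis a = (\<Prod>a'\<in>A - {a}. [:- a', 1:])" for a
  define L where "L = (\<Sum>a\<in>A. smult (lagrange_weight A a * a ^ i) (basis a))"
  have degree_basis: "degree (basis a) = card A - 1" if "a \<in> A" for a
    unfolding basis_def using fin that by (subst degree_prod_eq_sum_degree) auto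
  have coeff_basis: "coeff (basis a) (card A - 1) = 1" if "a \<in> A" for a
  proof -
    have "lead_coeff (basis a) = 1" unfolding basis_def lead_coeff_prod by simp
    then show ?thesis using degree_basis[OF that] by simp
  qed
  have poly_basis: "poly (basis a) x = (\<Prod>a'\<in>A - {a}. x - a')" for a x
    unfolding basis_def poly_prod by simp
  have "degree L \<le> card A - 1"
    unfolding L_def by (rule degree_sum_le[OF fin]) (metis degree_basis degree_smult_le order_trans order_refl)
  moreover have "poly L x = x ^ i" if x: "x \<in> A" for x
  proof -
    have "poly L x = (\<Sum>a\<in>A. lagrange_weight A a * a ^ i * poly (basis a) x)"
      unfolding L_def poly_sum by simp
    also have "\<dots> = lagrange_weight A x * x ^ i * poly (basis x) x"
    proof -
      have "(\<Sum>a\<in>A - {x}. lagrange_weight A a * a ^ i * poly (basis a) x) = 0"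
        using fin x by (intro sum.neutral) (auto simp: poly_basis prod_zero_iff)
      then show ?thesis by (simp add: sum.remove[OF fin x])
    qed
    also have "\<dots> = x ^ i"
      using fin by (simp add: lagrange_weight_def poly_basis prod_zero_iff)
    finally show ?thesis .
  qed
  ultimately have "L = monom 1 i"
    by (intro poly_eqI_degree[of A]) (use i in \<open>auto simp: poly_monom degree_monom_eq\<close>)
  moreover have "coeff L (card A - 1) = (\<Sum>a\<in>A. lagrange_weight A a * a ^ i)"
    unfolding L_def coeff_sum coeff_smult by (intro sum.cong refl) (use coeff_basis in auto)
  ultimately show ?thesis by simp
qed

section \<open>Bivariate polynomials and the Combinatorial Nullstellensatz\<close>

text \<open>A bivariate polynomial is an element of \<open>'a poly poly\<close>: the outer variable is \<open>Y\<close>, the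
  inner one \<open>X\<close>, so \<open>bicoeff P i j\<close> is the coefficient of \<open>X\<^sup>i Y\<^sup>j\<close>.\<close>

definition bicoeff :: "'a::zero poly poly \<Rightarrow> nat \<Rightarrow> nat \<Rightarrow> 'a" where
  "bicoeff P i j = coeff (coeff P j) i"

definition bipoly :: "'a::comm_ring_1 poly poly \<Rightarrow> 'a \<Rightarrow> 'a \<Rightarrow> 'a" where
  "bipoly P x y = poly (poly P [:y:]) x"

definition bi_X :: "'a::comm_ring_1 poly poly" where
  "bi_X = [:[:0, 1:]:]"

definition bi_Y :: "'a::comm_ring_1 poly poly" where
  "bi_Y = [:0, 1:]"

definition bi_const :: "'a::comm_ring_1 \<Rightarrow> 'a poly poly" where
  "bi_const c = [:[:c:]:]"

lemma bipoly_mult [simp]: "bipoly (P * Q) x y = bipoly P x y * bipoly Q x y"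
  and bipoly_add [simp]: "bipoly (P + Q) x y = bipoly P x y + bipoly Q x y"
  and bipoly_diff [simp]: "bipoly (P - Q) x y = bipoly P x y - bipoly Q x y"
  and bipoly_power [simp]: "bipoly (P ^ k) x y = bipoly P x y ^ k"
  and bipoly_prod: "bipoly (\<Prod>z\<in>A. f z) x y = (\<Prod>z\<in>A. bipoly (f z) x y)"
  and bipoly_sum: "bipoly (\<Sum>z\<in>A. f z) x y = (\<Sum>z\<in>A. bipoly (f z) x y)"
  and bipoly_X [simp]: "bipoly bi_X x y = x"
  and bipoly_Y [simp]: "bipoly bi_Y x y = y"
  and bipoly_const [simp]: "bipoly (bi_const c) x y = c"
  by (simp_all add: bipoly_def poly_prod poly_sum poly_power bi_X_def bi_Y_def bi_const_def)

lemma bipoly_eq_double_sum: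
  fixes P :: "'a::comm_ring_1 poly poly"
  assumes total_degree: "\<And>i j. bicoeff P i j \<noteq> 0 \<Longrightarrow> i + j \<le> K"
  shows "bipoly P x y = (\<Sum>j\<le>K. \<Sum>i\<le>K. bicoeff P i j * x ^ i * y ^ j)"
proof -
  have degree_coeff: "degree (coeff P j) \<le> K" for j
  proof (rule degree_le, intro allI impI)
    fix i assume "K < i"
    then show "coeff (coeff P j) i = 0" using total_degree[of i j] by (auto simp: bicoeff_def)
  qed
  have "degree P \<le> K"
  proof (rule degree_le, intro allI impI)
    fix j assume "K < j"
    then have "coeff (coeff P j) i = 0" for i using total_degree[of i j] by (auto simp: bicoeff_def)
    then show "coeff P j = 0" by (simp add: poly_eq_iff)
  qed
  then have "bipoly P x y = (\<Sum>j\<le>K. poly (coeff P j) x * y ^ j)"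
    by (simp add: bipoly_def poly_eq_sum_upto[of P K] poly_sum poly_power)
  also have "\<dots> = (\<Sum>j\<le>K. \<Sum>i\<le>K. bicoeff P i j * x ^ i * y ^ j)"
    by (simp add: poly_eq_sum_upto[OF degree_coeff] sum_distrib_right bicoeff_def)
  finally show ?thesis .
qed

lemma combinatorial_nullstellensatz:
  fixes P :: "'a::field poly poly"
  assumes finA: "finite A" and finB: "finite B"
    and cardA: "card A = Suc t1" and cardB: "card B = Suc t2"
    and total_degree: "\<And>i j. bicoeff P i j \<noteq> 0 \<Longrightarrow> i + j \<le> t1 + t2"
    and vanish: "\<And>x y. x \<in> A \<Longrightarrow> y \<in> B \<Longrightarrow> bipoly P x y = 0"
  shows "bicoeff P t1 t2 = 0"
proof -
  define K where "K = t1 + t2"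
  define wA where "wA i = (\<Sum>x\<in>A. lagrange_weight A x * x ^ i)" for i
  define wB where "wB j = (\<Sum>y\<in>B. lagrange_weight B y * y ^ j)" for j
  have wA: "i \<le> t1 \<Longrightarrow> wA i = (if i = t1 then 1 else 0)" for i
    unfolding wA_def using sum_lagrange_weight_power[OF finA, of i] cardA by simp
  have wB: "j \<le> t2 \<Longrightarrow> wB j = (if j = t2 then 1 else 0)" for j
    unfolding wB_def using sum_lagrange_weight_power[OF finB, of j] cardB by simp
  have "0 = (\<Sum>x\<in>A. \<Sum>y\<in>B. lagrange_weight A x * lagrange_weight B y * bipoly P x y)"
    using vanish by simp
  also have "\<dots> = (\<Sum>x\<in>A. \<Sum>y\<in>B. \<Sum>j\<le>K. \<Sum>i\<le>K.
      bicoeff P i j * ((lagrange_weight A x * x ^ i) * (lagrange_weight B y * y ^ j)))"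
  proof -
    have "bipoly P x y = (\<Sum>j\<le>K. \<Sum>i\<le>K. bicoeff P i j * x ^ i * y ^ j)" for x y
      using bipoly_eq_double_sum total_degree unfolding K_def by blast
    then show ?thesis by (simp add: sum_distrib_left mult_ac)
  qed
  also have "\<dots> = (\<Sum>j\<le>K. \<Sum>i\<le>K. \<Sum>x\<in>A. \<Sum>y\<in>B.
      bicoeff P i j * ((lagrange_weight A x * x ^ i) * (lagrange_weight B y * y ^ j)))"
    by (subst sum.swap, subst sum.swap, rule sum.cong[OF refl], subst (2) sum.swap,
        subst sum.swap, rule refl)
  also have "\<dots> = (\<Sum>j\<le>K. \<Sum>i\<le>K. bicoeff P i j * (wA i * wB j))"
    unfolding wA_def wB_def by (intro sum.cong refl) (subst sum_product, simp only: sum_distrib_left)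
  also have "\<dots> = (\<Sum>j\<le>K. \<Sum>i\<le>K. if i = t1 \<and> j = t2 then bicoeff P i j else 0)"
  proof (intro sum.cong refl)
    fix i j
    show "bicoeff P i j * (wA i * wB j) = (if i = t1 \<and> j = t2 then bicoeff P i j else 0)"
    proof (cases "bicoeff P i j = 0")
      case False
      then have "i + j \<le> t1 + t2" using total_degree by blast
      then have "i \<le> t1 \<and> j \<le> t2 \<or> i < t1 \<or> j < t2" by linarith
      then show ?thesis using wA wB by auto
    qed auto
  qed
  also have "\<dots> = (\<Sum>j\<le>K. if j = t2 then bicoeff P t1 t2 else 0)"
    by (intro sum.cong refl) (auto simp: K_def)
  also have "\<dots> = bicoeff P t1 t2"
    unfolding K_def by simp
  finally show ?thesis by simp
qed

lemma map_poly_add_hom: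
  assumes "f 0 = 0" "\<And>a b. f (a + b) = f a + f b"
  shows "map_poly f (p + q) = map_poly f p + map_poly f q"
  by (intro poly_eqI) (simp add: assms coeff_map_poly)

lemma map_poly_mult_hom:
  fixes f :: "'a::comm_ring_1 \<Rightarrow> 'b::comm_ring_1"
  assumes f0: "f 0 = 0" and f_add: "\<And>a b. f (a + b) = f a + f b"
    and f_mult: "\<And>a b. f (a * b) = f a * f b"
  shows "map_poly f (p * q) = map_poly f p * map_poly f q"
proof (induction p)
  case (pCons a p)
  have "map_poly f (pCons a p * q) = map_poly f (smult a q) + map_poly f (pCons 0 (p * q))"
    by (simp add: map_poly_add_hom[OF f0 f_add])
  also have "\<dots> = smult (f a) (map_poly f q) + pCons 0 (map_poly f p * map_poly f q)"
    by (simp add: map_poly_smult[OF f0 f_mult] map_poly_pCons[where f=f, OF f0] f0 pCons.IH)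
  also have "\<dots> = map_poly f (pCons a p) * map_poly f q"
    by (simp add: map_poly_pCons[where f=f, OF f0])
  finally show ?case .
qed simp

text \<open>\<open>homogeneous_parts P\<close> is \<open>P(x t, t)\<close>, a polynomial in \<open>t\<close> over \<open>'a poly\<close> (in \<open>x\<close>): its
  \<open>t\<^sup>k\<close>-coefficient is the degree-\<open>k\<close> homogeneous component of \<open>P\<close> with \<open>Y := 1\<close>.
  \<open>dilate q\<close> is \<open>q(x t)\<close>.\<close>

definition dilate :: "'a::comm_ring_1 poly \<Rightarrow> 'a poly poly" where
  "dilate q = poly (map_poly (\<lambda>c. [:[:c:]:]) q) [:0, [:0, 1:]:]"

definition homogeneous_parts :: "'a::comm_ring_1 poly poly \<Rightarrow> 'a poly poly" where
  "homogeneous_parts P = poly (map_poly dilate P) [:0, 1:]"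

lemma dilate_add: "dilate (p + q) = dilate p + dilate q"
  unfolding dilate_def by (subst map_poly_add_hom) auto

lemma dilate_mult: "dilate (p * q) = dilate p * dilate q"
  unfolding dilate_def by (subst map_poly_mult_hom) auto

lemma dilate_pCons: "dilate (pCons c q) = [:[:c:]:] + [:0, [:0, 1:]:] * dilate q"
  unfolding dilate_def by (simp add: map_poly_pCons)

lemma dilate_0 [simp]: "dilate 0 = 0"
  and dilate_const [simp]: "dilate [:c:] = [:[:c:]:]"
  by (simp_all add: dilate_def map_poly_pCons)

lemma coeff_dilate: "coeff (coeff (dilate q) k) i = (if i = k then coeff q i else 0)"
proof (induction q arbitrary: k i)
  case (pCons c q)
  have "[:0, [:0, 1:]:] * dilate q = pCons 0 (smult [:0, 1:] (dilate q))"
    by simp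
  then show ?case using pCons.IH
    by (cases k; cases i) (auto simp: dilate_pCons)
qed simp

lemma homogeneous_parts_add: "homogeneous_parts (P + Q) = homogeneous_parts P + homogeneous_parts Q"
  unfolding homogeneous_parts_def by (subst map_poly_add_hom) (auto simp: dilate_add)

lemma homogeneous_parts_mult: "homogeneous_parts (P * Q) = homogeneous_parts P * homogeneous_parts Q"
  unfolding homogeneous_parts_def
  by (subst map_poly_mult_hom) (auto simp: dilate_add dilate_mult)

lemma homogeneous_parts_pCons: "homogeneous_parts (pCons q P) = dilate q + [:0, 1:] * homogeneous_parts P"
  unfolding homogeneous_parts_def by (simp add: map_poly_pCons)

lemma homogeneous_parts_0 [simp]: "homogeneous_parts 0 = 0"
  by (simp add: homogeneous_parts_def)

lemma homogeneous_parts_1 [simp]: "homogeneous_parts 1 = 1"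
  unfolding one_pCons homogeneous_parts_pCons one_poly_def[symmetric] by (simp add: one_pCons)

lemma homogeneous_parts_diff: "homogeneous_parts (P - Q) = homogeneous_parts P - homogeneous_parts Q"
  using homogeneous_parts_add[of "P - Q" Q] by (simp add: eq_diff_eq)

lemma homogeneous_parts_prod: "homogeneous_parts (\<Prod>x\<in>A. f x) = (\<Prod>x\<in>A. homogeneous_parts (f x))"
  by (induction A rule: infinite_finite_induct) (auto simp: homogeneous_parts_mult)

lemma homogeneous_parts_sum: "homogeneous_parts (\<Sum>x\<in>A. f x) = (\<Sum>x\<in>A. homogeneous_parts (f x))"
  by (induction A rule: infinite_finite_induct) (auto simp: homogeneous_parts_add)

lemma homogeneous_parts_power: "homogeneous_parts (P ^ k) = homogeneous_parts P ^ k"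
  by (induction k) (auto simp: homogeneous_parts_mult)

lemma homogeneous_parts_X [simp]: "homogeneous_parts bi_X = [:0, [:0, 1:]:]"
proof -
  have "dilate [:0, 1:] = ([:0, [:0, 1:]:] :: 'a poly poly)"
    using dilate_pCons[of 0 "1::'a poly"]
    by (simp add: one_pCons[symmetric] dilate_const[of 1, simplified one_pCons[symmetric]])
  then show ?thesis unfolding bi_X_def homogeneous_parts_def by (simp add: map_poly_pCons)
qed

lemma homogeneous_parts_Y [simp]: "homogeneous_parts bi_Y = [:0, 1:]"
  unfolding bi_Y_def using homogeneous_parts_pCons[of 0 1] by (simp add: one_pCons[symmetric])

lemma homogeneous_parts_const [simp]: "homogeneous_parts (bi_const c) = bi_const c"
  by (simp add: bi_const_def homogeneous_parts_def map_poly_pCons)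

lemma coeff_homogeneous_parts:
  "coeff (coeff (homogeneous_parts P) k) i = (if i \<le> k then bicoeff P i (k - i) else 0)"
proof (induction P arbitrary: k i)
  case (pCons q P)
  then show ?case
    by (auto simp: homogeneous_parts_pCons coeff_dilate coeff_pCons' bicoeff_def)
qed (simp add: bicoeff_def)

lemma homogeneous_parts_linear:
  "homogeneous_parts (bi_X - bi_Y - bi_const s) = [:[:- s:], [:- 1, 1:]:]"
  "homogeneous_parts (bi_X + bi_Y - bi_const s) = [:[:- s:], [:1, 1:]:]"
  "homogeneous_parts (bi_X + bi_Y) = [:0, [:1, 1:]:]"
  unfolding homogeneous_parts_diff homogeneous_parts_add homogeneous_parts_X homogeneous_parts_Y
    homogeneous_parts_const
  by (simp_all add: bi_const_def one_pCons)

lemma coeff_top_homogeneous_part_eq_0: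
  fixes P :: "'a::field poly poly"
  assumes "finite A" "finite B" "card A = Suc t1" "card B = Suc t2"
    and degree: "degree (homogeneous_parts P) \<le> t1 + t2"
    and vanish: "\<And>x y. x \<in> A \<Longrightarrow> y \<in> B \<Longrightarrow> bipoly P x y = 0"
  shows "coeff (coeff (homogeneous_parts P) (t1 + t2)) t1 = 0"
proof -
  have "bicoeff P i j = 0" if "t1 + t2 < i + j" for i j
  proof -
    have "coeff (homogeneous_parts P) (i + j) = 0"
      using degree that by (simp add: coeff_eq_0)
    then show ?thesis using coeff_homogeneous_parts[of P "i + j" i] by simp
  qed
  then have "bicoeff P t1 t2 = 0"
    using combinatorial_nullstellensatz[OF assms(1-4) _ vanish] by (meson not_le)
  then show ?thesis using coeff_homogeneous_parts[of P "t1 + t2" t1] by simp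
qed

lemma top_homogeneous_part_two_coeffs_eq_0:
  fixes P :: "'a::field poly poly"
  assumes fin: "finite A" "finite B" and A: "2 \<le> card A" and B: "1 \<le> card B"
    and D: "D = (card A - 2) + (card B - 1)" and degree: "degree (homogeneous_parts P) \<le> D"
    and vanish: "\<And>x y. x \<in> A \<Longrightarrow> y \<in> B \<Longrightarrow> bipoly P x y = 0"
  shows "coeff (coeff (homogeneous_parts P) D) (card A - 2) = 0"
    and "2 \<le> card B \<Longrightarrow> coeff (coeff (homogeneous_parts P) D) (card A - 1) = 0"
proof -
  have "Suc (card A - 2) \<le> card A" using A by simp
  then obtain A' where A': "A' \<subseteq> A" "card A' = Suc (card A - 2)" "finite A'"
    by (rule obtain_subset_with_card_n)
  show "coeff (coeff (homogeneous_parts P) D) (card A - 2) = 0"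
    unfolding D using A' B degree vanish
    by (intro coeff_top_homogeneous_part_eq_0[OF A'(3) fin(2)]) (auto simp: D)
next
  assume "2 \<le> card B"
  then have "Suc (card B - 2) \<le> card B" by simp
  then obtain B' where B': "B' \<subseteq> B" "card B' = Suc (card B - 2)" "finite B'"
    by (rule obtain_subset_with_card_n)
  have D': "D = (card A - 1) + (card B - 2)" using A \<open>2 \<le> card B\<close> unfolding D by simp
  show "coeff (coeff (homogeneous_parts P) D) (card A - 1) = 0"
    unfolding D' using A B' degree[unfolded D'] vanish
    by (intro coeff_top_homogeneous_part_eq_0[OF fin(1) B'(3)]) auto
qed

text \<open>The bivariate polynomial \<open>(g(X + Y - c) - g(Y)) / (X - c)\<close>, written out via
  \<open>z\<^sup>k - y\<^sup>k = (z - y) \<Sum>\<^sub>i\<^sub><\<^sub>k y\<^sup>k\<^sup>-\<^sup>1\<^sup>-\<^sup>i z\<^sup>i\<close>.\<close>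

definition divided_difference :: "'a::comm_ring_1 poly \<Rightarrow> 'a \<Rightarrow> 'a poly poly" where
  "divided_difference g c = (\<Sum>k\<le>degree g. bi_const (coeff g k) *
     (\<Sum>i<k. bi_Y ^ (k - Suc i) * (bi_X + bi_Y - bi_const c) ^ i))"

lemma bipoly_divided_difference:
  "bipoly (divided_difference g c) x y * (x - c) = poly g (x + y - c) - poly g y"
proof -
  define z where "z = x + y - c"
  have "bipoly (divided_difference g c) x y * (x - c)
      = (\<Sum>k\<le>degree g. coeff g k * ((z - y) * (\<Sum>i<k. y ^ (k - Suc i) * z ^ i)))"
    unfolding divided_difference_def bipoly_sum z_def
    by (simp add: bipoly_sum sum_distrib_right sum_distrib_left mult_ac)
  also have "\<dots> = (\<Sum>k\<le>degree g. coeff g k * (z ^ k - y ^ k))"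
    by (simp add: power_diff_sumr2)
  also have "\<dots> = poly g z - poly g y"
    by (simp add: poly_altdef right_diff_distrib sum_subtractf)
  finally show ?thesis unfolding z_def .
qed

lemma degree_coeff_geometric_sum:
  fixes Z :: "'a::idom poly"
  assumes "degree Z \<le> 1"
  shows "degree (\<Sum>i<k. [:0, 1:] ^ (k - Suc i) * Z ^ i) \<le> k - 1 \<and>
    coeff (\<Sum>i<k. [:0, 1:] ^ (k - Suc i) * Z ^ i) (k - 1) = (\<Sum>i<k. coeff Z 1 ^ i)"
proof -
  have summand: "degree ([:0, 1:] ^ (k - Suc i) * Z ^ i) \<le> k - 1 \<and>
      coeff ([:0, 1:] ^ (k - Suc i) * Z ^ i) (k - 1) = coeff Z 1 ^ i" if "i < k" for i
  proof -
    have X: "degree ([:0, 1:] ^ (k - Suc i) :: 'a poly) \<le> k - Suc i \<and>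
        coeff ([:0, 1:] ^ (k - Suc i) :: 'a poly) (k - Suc i) = 1"
      using degree_coeff_power_bound[of "[:0, 1:] :: 'a poly" 1 "k - Suc i"] by simp
    have Zi: "degree (Z ^ i) \<le> i \<and> coeff (Z ^ i) i = coeff Z 1 ^ i"
      using degree_coeff_power_bound[OF assms, of i] by simp
    have "k - 1 = (k - Suc i) + i" using that by simp
    then show ?thesis
      using degree_coeff_mult_bound[OF conjunct1[OF X] conjunct1[OF Zi]] X Zi by simp
  qed
  show ?thesis
    unfolding coeff_sum using summand by (auto intro: degree_sum_le)
qed

lemma homogeneous_parts_divided_difference:
  fixes g :: "'a::field poly"
  assumes deg: "degree g = n" "n \<ge> 1" and monic: "lead_coeff g = 1"
  shows "degree (homogeneous_parts (divided_difference g c)) \<le> n - 1 \<and>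
    coeff (homogeneous_parts (divided_difference g c)) (n - 1) = (\<Sum>i<n. [:1, 1:] ^ i)"
proof -
  define Z where "Z = homogeneous_parts (bi_X + bi_Y - bi_const c)"
  define T where "T k = (\<Sum>i<k. [:0, 1:] ^ (k - Suc i) * Z ^ i)" for k
  have "degree Z \<le> 1" "coeff Z 1 = [:1, 1:]"
    unfolding Z_def homogeneous_parts_linear by auto
  then have T: "degree (T k) \<le> k - 1" "coeff (T k) (k - 1) = (\<Sum>i<k. [:1, 1:] ^ i)" for k
    unfolding T_def using degree_coeff_geometric_sum[of Z k] by simp_all
  have "homogeneous_parts (divided_difference g c) = (\<Sum>k\<le>n. bi_const (coeff g k) * T k)"
    unfolding divided_difference_def homogeneous_parts_sum T_def Z_def deg(1)
    by (simp add: homogeneous_parts_sum homogeneous_parts_mult homogeneous_parts_power)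
  also have "\<dots> = (\<Sum>k\<le>n. smult [:coeff g k:] (T k))"
    by (simp add: bi_const_def)
  finally have parts: "homogeneous_parts (divided_difference g c) = (\<Sum>k\<le>n. smult [:coeff g k:] (T k))" .
  have "degree (smult [:coeff g k:] (T k)) \<le> n - 1" if "k \<le> n" for k
    using degree_smult_le[of "[:coeff g k:]" "T k"] T(1)[of k] that by linarith
  then have "degree (homogeneous_parts (divided_difference g c)) \<le> n - 1"
    unfolding parts by (intro degree_sum_le) auto
  moreover have "coeff (T k) (n - 1) = 0" if "k < n" for k
  proof (cases "k = 0")
    case False
    then show ?thesis using T(1)[of k] that by (intro coeff_eq_0) linarith
  qed (simp add: T_def)
  then have "coeff (homogeneous_parts (divided_difference g c)) (n - 1)
      = (\<Sum>k\<le>n. if k = n then (\<Sum>i<n. [:1, 1:] ^ i) else 0)"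
    unfolding parts coeff_sum coeff_smult
    by (intro sum.cong refl) (use monic deg(1) T(2) in auto)
  ultimately show ?thesis by simp
qed

section \<open>The coefficients of \<open>(x - 1)\<^sup>h (x + 1)\<^sup>E\<close> in characteristic \<open>p\<close>\<close>

lemma binomial_product_coeff_recurrence:
  fixes h E w :: nat
  defines "g \<equiv> [:- 1, 1:] ^ h * [:1, 1:] ^ E :: 'a::field poly"
  shows "of_nat (w + 2) * coeff g (w + 2)
    = (of_nat w - of_nat (h + E)) * coeff g w - (of_nat h - of_nat E) * coeff g (w + 1)"
proof -
  define u :: "'a poly" where "u = [:- 1, 1:]"
  define v :: "'a poly" where "v = [:1, 1:]"
  have g: "g = u ^ h * v ^ E" unfolding g_def u_def v_def ..
  have power_rule: "f * pderiv (f ^ k) = smult (of_nat k) (f ^ k)" if "pderiv f = 1" for f :: "'a poly" and k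
  proof (cases k)
    case (Suc m)
    have "f * pderiv (f ^ Suc m) = smult (of_nat (Suc m)) (f * f ^ m)"
      by (simp only: pderiv_power_Suc that mult.right_neutral mult_smult_right)
    then show ?thesis using Suc by simp
  qed simp
  have du: "u * pderiv (u ^ k) = smult (of_nat k) (u ^ k)" for k
    by (rule power_rule) (simp add: u_def pderiv_pCons)
  have dv: "v * pderiv (v ^ k) = smult (of_nat k) (v ^ k)" for k
    by (rule power_rule) (simp add: v_def pderiv_pCons)
  txt \<open>\<open>g\<close> satisfies the differential equation \<open>(x\<^sup>2 - 1) g' = (E (x - 1) + h (x + 1)) g\<close>.\<close>
  have "(u * v) * pderiv g = u * u ^ h * (v * pderiv (v ^ E)) + v * v ^ E * (u * pderiv (u ^ h))"
    unfolding g pderiv_mult by (simp add: algebra_simps)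
  also have "\<dots> = (smult (of_nat E) u + smult (of_nat h) v) * g"
    unfolding du dv g by (simp add: algebra_simps)
  finally have ode: "(u * v) * pderiv g = (smult (of_nat E) u + smult (of_nat h) v) * g" .
  have uv: "u * v = monom 1 2 - 1"
    unfolding u_def v_def by (simp add: monom_altdef numeral_2_eq_2 one_pCons)
  have "coeff ((u * v) * pderiv g) (w + 1) = of_nat w * coeff g w - of_nat (w + 2) * coeff g (w + 2)"
    unfolding uv left_diff_distrib coeff_diff coeff_monom_mult
    by (cases w) (simp_all add: coeff_pderiv algebra_simps)
  moreover have "coeff ((smult (of_nat E) u + smult (of_nat h) v) * g) (w + 1)
      = (of_nat h - of_nat E) * coeff g (w + 1) + (of_nat h + of_nat E) * coeff g w"
    unfolding u_def v_def by (simp add: algebra_simps)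
  ultimately have "of_nat w * coeff g w - of_nat (w + 2) * coeff g (w + 2)
      = (of_nat h - of_nat E) * coeff g (w + 1) + (of_nat h + of_nat E) * coeff g w"
    using ode by metis
  then show ?thesis by (simp add: algebra_simps)
qed

lemma recurrence_zeros_up:
  fixes c :: "nat \<Rightarrow> 'a::field"
  assumes rec: "\<And>w. of_nat (w + 2) * c (w + 2) = (of_nat w - of_nat D) * c w - e * c (w + 1)"
    and zero: "c l = 0" "c (l + 1) = 0"
    and nonzero: "\<And>k. l + 2 \<le> k \<Longrightarrow> k \<le> u \<Longrightarrow> of_nat k \<noteq> (0::'a)"
  shows "l \<le> j \<Longrightarrow> j \<le> u \<Longrightarrow> c j = 0"
proof (induction j rule: less_induct)
  case (less j)
  show ?case
  proof (cases "j \<le> l + 1")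
    case True
    then have "j = l \<or> j = l + 1" using less.prems by auto
    then show ?thesis using zero by auto
  next
    case False
    then have j: "j - 2 + 2 = j" "j - 2 + 1 = j - 1" by auto
    have "c (j - 2) = 0" "c (j - 1) = 0" using less False by auto
    then have "of_nat j * c j = 0" using rec[of "j - 2"] unfolding j by simp
    then show ?thesis using nonzero[of j] False less.prems by simp
  qed
qed

lemma recurrence_zeros_down:
  fixes c :: "nat \<Rightarrow> 'a::field"
  assumes rec: "\<And>w. of_nat (w + 2) * c (w + 2) = (of_nat w - of_nat D) * c w - e * c (w + 1)"
    and zero: "c u = 0" "c (u + 1) = 0"
    and nonzero: "\<And>k. l \<le> k \<Longrightarrow> k < u \<Longrightarrow> of_nat k \<noteq> (of_nat D :: 'a)"
  shows "l \<le> j \<Longrightarrow> j \<le> u + 1 \<Longrightarrow> c j = 0"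
proof (induction "u + 1 - j" arbitrary: j rule: less_induct)
  case less
  show ?case
  proof (cases "u \<le> j")
    case True
    then have "j = u \<or> j = u + 1" using less.prems by auto
    then show ?thesis using zero by auto
  next
    case False
    have "c (j + 1) = 0" "c (j + 2) = 0"
      using less.hyps[of "j + 1"] less.hyps[of "j + 2"] less.prems False by auto
    then have "(of_nat j - of_nat D) * c j = 0" using rec[of j] by simp
    then show ?thesis using nonzero[of j] False less.prems by simp
  qed
qed

lemma dvd_imp_eq_0_if_high_coeffs_vanish:
  fixes q r :: "'a::idom poly"
  assumes "q dvd r" "w \<le> degree q" "\<And>j. w \<le> j \<Longrightarrow> coeff r j = 0"
  shows "r = 0"
proof (rule ccontr)
  assume "r \<noteq> 0"
  then have "w \<le> degree r" using assms(1,2) dvd_imp_degree[of q r] by auto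
  then show False using assms(3)[of "degree r"] \<open>r \<noteq> 0\<close> by simp
qed

lemma linear_power_CHAR:
  fixes c :: "'a::comm_ring_1"
  assumes "CHAR('a) = p" "prime p"
  shows "[:c, 1:] ^ p = monom 1 p + [:c ^ p:]"
proof -
  have prime: "prime CHAR('a poly)" using assms by simp
  have "([:0, 1:] + [:c:]) ^ p = [:0, 1:] ^ p + [:c:] ^ p"
    by (rule freshmans_dream[OF prime]) (simp only: semiring_char_poly assms(1))
  then show ?thesis by (simp add: monom_altdef one_pCons poly_const_pow)
qed

lemma poly_split_at_coeff_gap:
  fixes g :: "'a::comm_ring_1 poly"
  assumes gap: "\<And>j. w \<le> j \<Longrightarrow> j < p \<Longrightarrow> coeff g j = 0" and "w \<le> p" and degree: "degree g < p + w"
  obtains L H where "g = L + monom 1 p * H" "\<And>j. w \<le> j \<Longrightarrow> coeff L j = 0" "\<And>j. w \<le> j \<Longrightarrow> coeff H j = 0"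
proof
  define L where "L = (\<Sum>j<w. monom (coeff g j) j)"
  define H where "H = (\<Sum>j<w. monom (coeff g (p + j)) j)"
  have coeff_L: "coeff L j = (if j < w then coeff g j else 0)" for j
    unfolding L_def coeff_sum by (simp add: coeff_monom)
  have coeff_H: "coeff H j = (if j < w then coeff g (p + j) else 0)" for j
    unfolding H_def coeff_sum by (simp add: coeff_monom)
  show "coeff L j = 0" "coeff H j = 0" if "w \<le> j" for j
    using that by (simp_all add: coeff_L coeff_H)
  show "g = L + monom 1 p * H"
  proof (rule poly_eqI)
    fix j
    show "coeff g j = coeff (L + monom 1 p * H) j"
    proof (cases "j < p")
      case True
      then show ?thesis using gap[of j] by (auto simp: coeff_L coeff_monom_mult)
    next
      case False
      then have "w \<le> j - p \<Longrightarrow> coeff g j = 0" using degree by (intro coeff_eq_0) simp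
      then show ?thesis using False \<open>w \<le> p\<close> by (auto simp: coeff_L coeff_H coeff_monom_mult)
    qed
  qed
qed

text \<open>If the window were empty, write \<open>g = L + x\<^sup>p H\<close> with \<open>L, H\<close> of degree \<open>< w\<close>. By Frobenius
  \<open>(x \<mp> 1)\<^sup>p = x\<^sup>p \<mp> 1\<close>, so \<open>L + H\<close> is divisible by \<open>(x - 1)\<^sup>h\<close> and \<open>L - H\<close> by \<open>(x + 1)\<^sup>E\<close>; both are
  too small for that, so \<open>L = H = 0\<close>.\<close>

lemma binomial_product_coeff_window:
  fixes h E w p :: nat
  assumes char: "CHAR('a::field) = p" and p: "prime p" "odd p"
    and "w \<le> h" "w \<le> E" "h \<le> p" "E \<le> p" and degree: "h + E < p + w"
  shows "\<exists>j. w \<le> j \<and> j < p \<and> coeff ([:- 1, 1:] ^ h * [:1, 1:] ^ E :: 'a poly) j \<noteq> 0"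
proof (rule ccontr)
  define g :: "'a poly" where "g = [:- 1, 1:] ^ h * [:1, 1:] ^ E"
  assume "\<not> ?thesis"
  then have gap: "coeff g j = 0" if "w \<le> j" "j < p" for j
    using that unfolding g_def by blast
  have "w \<le> p" using \<open>w \<le> h\<close> \<open>h \<le> p\<close> by simp
  moreover have "degree g < p + w"
    unfolding g_def using degree by (simp add: degree_mult_eq degree_linear_power)
  ultimately obtain L H where split: "g = L + monom 1 p * H"
    and small: "\<And>j. w \<le> j \<Longrightarrow> coeff L j = 0" "\<And>j. w \<le> j \<Longrightarrow> coeff H j = 0"
    using poly_split_at_coeff_gap[OF gap] by blast
  have frob_minus: "[:- 1, 1:] ^ p = monom 1 p - (1 :: 'a poly)"
    using linear_power_CHAR[OF char p(1), of "- 1"] p(2) by (simp add: neg_one_odd_power one_pCons)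
  have frob_plus: "[:1, 1:] ^ p = monom 1 p + (1 :: 'a poly)"
    using linear_power_CHAR[OF char p(1), of 1] by (simp add: one_pCons)
  have ring: "(L' + m * H') - (m - 1) * H' = L' + H'" "(L' + m * H') - (m + 1) * H' = L' - H'"
    for L' m H' :: "'a poly" by (simp_all add: algebra_simps)
  have "[:- 1, 1:] ^ h dvd g - [:- 1, 1:] ^ p * H"
    using le_imp_power_dvd[OF \<open>h \<le> p\<close>, of "[:- 1, 1:] :: 'a poly"] unfolding g_def
    by (intro dvd_diff) (simp_all add: dvd_mult2)
  moreover have "g - [:- 1, 1:] ^ p * H = L + H"
    unfolding frob_minus split by (rule ring(1))
  ultimately have sum_zero: "L + H = 0"
    using \<open>w \<le> h\<close> small by (intro dvd_imp_eq_0_if_high_coeffs_vanish[of "[:- 1, 1:] ^ h"])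
      (auto simp: degree_linear_power)
  have "[:1, 1:] ^ E dvd g - [:1, 1:] ^ p * H"
    using le_imp_power_dvd[OF \<open>E \<le> p\<close>, of "[:1, 1:] :: 'a poly"] unfolding g_def
    by (intro dvd_diff) (simp_all add: dvd_mult2)
  moreover have "g - [:1, 1:] ^ p * H = L - H"
    unfolding frob_plus split by (rule ring(2))
  ultimately have diff_zero: "L - H = 0"
    using \<open>w \<le> E\<close> small by (intro dvd_imp_eq_0_if_high_coeffs_vanish[of "[:1, 1:] ^ E"])
      (auto simp: degree_linear_power)
  have "H + H = (L + H) - (L - H)" by (simp add: algebra_simps)
  then have HH: "H + H = 0" using sum_zero diff_zero by simp
  have "2 < p" using prime_ge_2_nat[OF p(1)] p(2) by (cases "p = 2") auto
  then have "of_nat 2 \<noteq> (0 :: 'a)"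
    using char by (intro of_nat_neq_0_below_CHAR) auto
  moreover have "of_nat 2 * coeff H j = 0" for j
    using HH by (simp only: mult_2 of_nat_numeral coeff_add[symmetric] coeff_0)
  ultimately have "H = 0" by (simp add: poly_eq_iff)
  moreover have "g \<noteq> 0" unfolding g_def by simp
  ultimately show False using sum_zero split by simp
qed

lemma binomial_product_coeffs_vanish_between:
  fixes h E l j p :: nat
  assumes char: "CHAR('a::field) = p"
    and zero: "coeff ([:- 1, 1:] ^ h * [:1, 1:] ^ E :: 'a poly) l = 0"
      "coeff ([:- 1, 1:] ^ h * [:1, 1:] ^ E :: 'a poly) (l + 1) = 0"
    and "l \<le> h + E" and j: "h + E + 1 - p \<le> j" "j < p"
  shows "coeff ([:- 1, 1:] ^ h * [:1, 1:] ^ E :: 'a poly) j = 0"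
proof -
  define D where "D = h + E"
  note rec = binomial_product_coeff_recurrence[where 'a='a and h=h and E=E, folded D_def]
  show ?thesis
  proof (cases "l \<le> j")
    case True
    have "of_nat k \<noteq> (0 :: 'a)" if "l + 2 \<le> k" "k \<le> j" for k
      using that char j by (intro of_nat_neq_0_below_CHAR) auto
    then show ?thesis using True by (rule recurrence_zeros_up[OF rec zero, where u = j]) simp_all
  next
    case False
    have "of_nat k \<noteq> (of_nat D :: 'a)" if "j \<le> k" "k < l" for k
    proof
      assume "of_nat k = (of_nat D :: 'a)"
      then have "of_nat (D - k) = (0 :: 'a)"
        using that \<open>l \<le> h + E\<close> unfolding D_def by (simp add: of_nat_diff)
      moreover have "0 < D - k" "D - k < p"
        using that j \<open>l \<le> h + E\<close> unfolding D_def by auto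
      ultimately show False using of_nat_neq_0_below_CHAR[where 'a='a, of "D - k"] char by simp
    qed
    then show ?thesis using False j(1)
      by (intro recurrence_zeros_down[OF rec zero, where l = j]) auto
  qed
qed

lemma coeff_binomial_product_nonzero:
  fixes p h r n :: nat
  assumes char: "CHAR('a::field) = p" and p: "prime p"
    and "h < p" "h + 2 \<le> r" "1 \<le> n" "n < p" and size: "r + n \<le> p + h + 1"
  shows "coeff ([:- 1, 1:] ^ h * [:1, 1:] ^ (r + n - h - 2) :: 'a poly) (r - 1) \<noteq> 0 \<or>
    (2 \<le> n \<and> coeff ([:- 1, 1:] ^ h * [:1, 1:] ^ (r + n - h - 2) :: 'a poly) r \<noteq> 0)"
proof (rule ccontr)
  define E where "E = r + n - h - 2"
  define g :: "'a poly" where "g = [:- 1, 1:] ^ h * [:1, 1:] ^ E"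
  have D: "h + E = r + n - 2" unfolding E_def using assms by simp
  have "lead_coeff g = 1" unfolding g_def by (simp add: lead_coeff_mult lead_coeff_power)
  moreover have "degree g = h + E" unfolding g_def by (simp add: degree_mult_eq degree_linear_power)
  ultimately have lead: "coeff g (h + E) = 1" by simp
  assume "\<not> ?thesis"
  then have zero: "coeff g (r - 1) = 0" "2 \<le> n \<Longrightarrow> coeff g r = 0"
    unfolding g_def E_def by auto
  have "2 \<le> n"
  proof (rule ccontr)
    assume "\<not> 2 \<le> n"
    then have "h + E = r - 1" unfolding D using \<open>1 \<le> n\<close> by simp
    then show False using zero(1) lead by simp
  qed
  then have "coeff g (r - 1) = 0" "coeff g (r - 1 + 1) = 0" "r - 1 \<le> h + E"
    using zero \<open>h + 2 \<le> r\<close> unfolding D by simp_all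
  then have between: "coeff g j = 0" if "h + E + 1 - p \<le> j" "j < p" for j
    using that unfolding g_def by (rule binomial_product_coeffs_vanish_between[OF char])
  have "2 < p" using \<open>2 \<le> n\<close> \<open>n < p\<close> by simp
  show False
  proof (cases "h + E < p")
    case True
    then show False using between[of "h + E"] lead by simp
  next
    case False
    have "odd p" using p \<open>2 < p\<close> by (rule prime_odd_nat)
    moreover have "h + E + 1 - p \<le> h" "h + E + 1 - p \<le> E" "h \<le> p" "E \<le> p" "h + E < p + (h + E + 1 - p)"
      using \<open>h < p\<close> size False unfolding E_def by auto
    ultimately obtain j where "h + E + 1 - p \<le> j" "j < p" "coeff g j \<noteq> 0"
      using binomial_product_coeff_window[OF char p] unfolding g_def by blast
    then show False using between by simp
  qed
qed

lemma coeff_mult_geometric_sum: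
  fixes R :: "'a::comm_ring_1 poly"
  assumes "degree R \<le> k"
  shows "coeff (R * [:1, 1:] ^ n) (Suc k) = coeff (R * (\<Sum>i<n. [:1, 1:] ^ i)) k"
proof -
  have geometric: "[:0, 1:] * (\<Sum>i<n. [:1, 1:] ^ i) = [:1, 1:] ^ n - (1 :: 'a poly)"
    using power_diff_1_eq[of "[:1, 1:] :: 'a poly" n] by (simp add: one_pCons)
  have "pCons 0 (R * (\<Sum>i<n. [:1, 1:] ^ i)) = R * ([:0, 1:] * (\<Sum>i<n. [:1, 1:] ^ i))"
    by simp
  also have "\<dots> = R * [:1, 1:] ^ n - R"
    unfolding geometric by (simp add: right_diff_distrib)
  finally have "pCons 0 (R * (\<Sum>i<n. [:1, 1:] ^ i)) = R * [:1, 1:] ^ n - R" .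
  moreover have "coeff R (Suc k) = 0" using assms by (simp add: coeff_eq_0)
  ultimately show ?thesis by (metis coeff_diff coeff_pCons_Suc diff_zero)
qed

lemma coeff_binomial_geometric_product_nonzero:
  fixes p h r n :: nat
  assumes "CHAR('a::field) = p" "prime p" and "h < p" "h + 2 \<le> r" "1 \<le> n" "n < p"
    and "r + n \<le> p + h + 1"
  defines "T \<equiv> [:- 1, 1:] ^ h * [:1, 1:] ^ (r - h - 2) * (\<Sum>i<n. [:1, 1:] ^ i) :: 'a poly"
  shows "coeff T (r - 2) \<noteq> 0 \<or> (2 \<le> n \<and> coeff T (r - 1) \<noteq> 0)"
proof -
  have "coeff ([:- 1, 1:] ^ h * [:1, 1:] ^ (r + n - h - 2)) (Suc k) = coeff T k"
    if "r - 2 \<le> k" for k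
  proof -
    have "degree ([:- 1, 1:] ^ h * [:1, 1:] ^ (r - h - 2) :: 'a poly) \<le> k"
      using that assms by (simp add: degree_mult_eq degree_linear_power)
    moreover have "[:- 1, 1:] ^ h * [:1, 1:] ^ (r + n - h - 2)
        = [:- 1, 1:] ^ h * [:1, 1:] ^ (r - h - 2) * ([:1, 1:] ^ n :: 'a poly)"
      using assms by (simp add: power_add[symmetric] mult.assoc)
    ultimately show ?thesis
      unfolding T_def by (simp only: coeff_mult_geometric_sum)
  qed
  moreover have "Suc (r - 2) = r - 1" "Suc (r - 1) = r" using assms by auto
  ultimately show ?thesis
    using coeff_binomial_product_nonzero[OF assms(1-7)] by (metis order_refl le_SucI)
qed

section \<open>Restricted sumsets avoiding a translate\<close>

text \<open>The factor \<open>(X + Y)\<^bsup>q - |E|\<^esup>\<close> pads the product over \<open>E\<close> to \<open>q\<close> linear factors, so that the top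
  homogeneous part does not depend on \<open>|E|\<close>.\<close>

definition sumset_polynomial :: "'a::comm_ring_1 set \<Rightarrow> 'a set \<Rightarrow> nat \<Rightarrow> 'a set \<Rightarrow> 'a \<Rightarrow> 'a poly poly" where
  "sumset_polynomial S E q B c =
     (\<Prod>s\<in>S. bi_X - bi_Y - bi_const s) * (\<Prod>e\<in>E. bi_X + bi_Y - bi_const e) *
     (bi_X + bi_Y) ^ (q - card E) * divided_difference (\<Prod>b\<in>B. [:- b, 1:]) c"

lemma bipoly_sumset_polynomial_eq_0:
  fixes A B S E :: "'a::field set"
  assumes fin: "finite S" "finite E" "finite B" and "c \<notin> A"
    and E: "restricted_sumset A B S - (+) c ` B \<subseteq> E" and xy: "x \<in> A" "y \<in> B"
  shows "bipoly (sumset_polynomial S E q B c) x y = 0"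
proof -
  define g :: "'a poly" where "g = (\<Prod>b\<in>B. [:- b, 1:])"
  have g_root: "poly g z = 0 \<longleftrightarrow> z \<in> B" for z
    unfolding g_def poly_prod using fin by simp
  have eval: "bipoly (sumset_polynomial S E q B c) x y = (\<Prod>s\<in>S. x - y - s) * (\<Prod>e\<in>E. x + y - e) *
      (x + y) ^ (q - card E) * bipoly (divided_difference g c) x y"
    by (simp add: sumset_polynomial_def bipoly_prod g_def)
  consider "x - y \<in> S" | "x + y \<in> E" | "x + y - c \<in> B"
    using E xy unfolding restricted_sumset_def by (force simp: algebra_simps)
  then show ?thesis
  proof cases
    case 1
    then show ?thesis unfolding eval using fin by (simp add: prod_zero_iff)
  next
    case 2
    then show ?thesis unfolding eval using fin by (simp add: prod_zero_iff)
  next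
    case 3
    then have "poly g (x + y - c) = 0" "poly g y = 0" using g_root xy by auto
    then have "bipoly (divided_difference g c) x y * (x - c) = 0"
      unfolding bipoly_divided_difference by simp
    moreover have "x - c \<noteq> 0" using \<open>c \<notin> A\<close> xy by auto
    ultimately show ?thesis unfolding eval by simp
  qed
qed

lemma top_homogeneous_part_sumset_polynomial:
  fixes S E B :: "'a::field set"
  assumes fin: "finite S" "finite E" "finite B" and "card E \<le> q" "B \<noteq> {}"
  shows "degree (homogeneous_parts (sumset_polynomial S E q B c)) \<le> card S + q + (card B - 1) \<and>
    coeff (homogeneous_parts (sumset_polynomial S E q B c)) (card S + q + (card B - 1))
      = [:- 1, 1:] ^ card S * [:1, 1:] ^ q * (\<Sum>i<card B. [:1, 1:] ^ i)"
proof -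
  define PS where "PS = (\<Prod>s\<in>S. homogeneous_parts (bi_X - bi_Y - bi_const s :: 'a poly poly))"
  define PE where "PE = (\<Prod>e\<in>E. homogeneous_parts (bi_X + bi_Y - bi_const e :: 'a poly poly))"
  define PQ where "PQ = homogeneous_parts (bi_X + bi_Y :: 'a poly poly) ^ (q - card E)"
  define PB where "PB = homogeneous_parts (divided_difference (\<Prod>b\<in>B. [:- b, 1:]) c)"
  have S: "degree PS \<le> card S \<and> coeff PS (card S) = [:- 1, 1:] ^ card S"
    using degree_coeff_prod_bound[OF fin(1), of "\<lambda>s. homogeneous_parts (bi_X - bi_Y - bi_const s)" "\<lambda>_. 1"]
    unfolding PS_def
    by (simp add: homogeneous_parts_linear)
  have E: "degree PE \<le> card E \<and> coeff PE (card E) = [:1, 1:] ^ card E"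
    using degree_coeff_prod_bound[OF fin(2), of "\<lambda>e. homogeneous_parts (bi_X + bi_Y - bi_const e)" "\<lambda>_. 1"]
    unfolding PE_def
    by (simp add: homogeneous_parts_linear)
  have Q: "degree PQ \<le> q - card E \<and> coeff PQ (q - card E) = [:1, 1:] ^ (q - card E)"
    using degree_coeff_power_bound[of "homogeneous_parts (bi_X + bi_Y :: 'a poly poly)" 1 "q - card E"]
    unfolding PQ_def by (simp add: homogeneous_parts_linear)
  have "degree (\<Prod>b\<in>B. [:- b, 1:]) = card B"
    using fin(3) by (subst degree_prod_eq_sum_degree) auto
  moreover have "lead_coeff (\<Prod>b\<in>B. [:- b, 1:]) = 1" by (simp add: lead_coeff_prod)
  moreover have "1 \<le> card B" using fin(3) \<open>B \<noteq> {}\<close> by (simp add: card_gt_0_iff Suc_le_eq)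
  ultimately have B: "degree PB \<le> card B - 1 \<and> coeff PB (card B - 1) = (\<Sum>i<card B. [:1, 1:] ^ i)"
    unfolding PB_def by (intro homogeneous_parts_divided_difference) simp_all
  have SE: "degree (PS * PE) \<le> card S + card E \<and>
      coeff (PS * PE) (card S + card E) = [:- 1, 1:] ^ card S * [:1, 1:] ^ card E"
    using degree_coeff_mult_bound[OF conjunct1[OF S] conjunct1[OF E]] S E by simp
  have SEQ: "degree (PS * PE * PQ) \<le> card S + q \<and>
      coeff (PS * PE * PQ) (card S + q) = [:- 1, 1:] ^ card S * [:1, 1:] ^ q"
    using degree_coeff_mult_bound[OF conjunct1[OF SE] conjunct1[OF Q]] SE Q \<open>card E \<le> q\<close>
    by (simp add: mult.assoc power_add[symmetric])
  have "homogeneous_parts (sumset_polynomial S E q B c) = PS * PE * PQ * PB"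
    unfolding sumset_polynomial_def PS_def PE_def PQ_def PB_def
    by (simp add: homogeneous_parts_mult homogeneous_parts_prod homogeneous_parts_power)
  then show ?thesis
    using degree_coeff_mult_bound[OF conjunct1[OF SEQ] conjunct1[OF B]] SEQ B by simp
qed

lemma card_restricted_sumset_diff_translate:
  fixes A B S :: "'a::field set"
  assumes char: "CHAR('a) = p" and p: "prime p" and fin: "finite A" "finite B" "finite S"
    and "c \<notin> A" and "card S < p" and A: "card S + 2 \<le> card A" and "B \<noteq> {}" and "card B < p"
    and size: "card A + card B \<le> p + card S + 1"
  shows "card A - card S - 1 \<le> card (restricted_sumset A B S - (+) c ` B)"
proof (rule ccontr)
  define E where "E = restricted_sumset A B S - (+) c ` B"
  define q where "q = card A - card S - 2"
  define D where "D = (card A - 2) + (card B - 1)"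
  define P where "P = sumset_polynomial S E q B c"
  assume "\<not> ?thesis"
  then have "card E \<le> q" unfolding E_def q_def by linarith
  have "finite E"
    unfolding E_def restricted_sumset_def
    by (rule finite_subset[of _ "(\<lambda>(x, y). x + y) ` (A \<times> B)"]) (use fin in auto)
  have vanish: "bipoly P x y = 0" if "x \<in> A" "y \<in> B" for x y
    unfolding P_def using that fin \<open>finite E\<close> \<open>c \<notin> A\<close>
    by (intro bipoly_sumset_polynomial_eq_0[where A = A]) (auto simp: E_def)
  have B: "1 \<le> card B" using fin(2) \<open>B \<noteq> {}\<close> by (simp add: Suc_le_eq card_gt_0_iff)
  have "card S + q + (card B - 1) = D" unfolding q_def D_def using A by simp
  then have top: "degree (homogeneous_parts P) \<le> D \<and>
      coeff (homogeneous_parts P) D = [:- 1, 1:] ^ card S * [:1, 1:] ^ q * (\<Sum>i<card B. [:1, 1:] ^ i)"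
    using top_homogeneous_part_sumset_polynomial[OF fin(3) \<open>finite E\<close> fin(2) \<open>card E \<le> q\<close> \<open>B \<noteq> {}\<close>]
    unfolding P_def by simp
  have "2 \<le> card A" using A by simp
  note zero = top_homogeneous_part_two_coeffs_eq_0[OF fin(1,2) this B D_def conjunct1[OF top] vanish]
  show False
    using coeff_binomial_geometric_product_nonzero[OF char p \<open>card S < p\<close> A B \<open>card B < p\<close> size] zero
    unfolding conjunct2[OF top] q_def by blast
qed

section \<open>Hall's marriage theorem\<close>

definition distinct_representatives :: "('i \<Rightarrow> 'b set) \<Rightarrow> 'i set \<Rightarrow> ('i \<Rightarrow> 'b) \<Rightarrow> bool" where
  "distinct_representatives F I f \<longleftrightarrow> inj_on f I \<and> (\<forall>i\<in>I. f i \<in> F i)"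

definition hall_condition :: "('i \<Rightarrow> 'b set) \<Rightarrow> 'i set \<Rightarrow> bool" where
  "hall_condition F I \<longleftrightarrow>
     finite I \<and> (\<forall>i\<in>I. finite (F i)) \<and> (\<forall>K. K \<subseteq> I \<longrightarrow> card K \<le> card (\<Union>(F ` K)))"

lemma hall_condition_subset: "hall_condition F I \<Longrightarrow> K0 \<subseteq> I \<Longrightarrow> hall_condition F K0"
  unfolding hall_condition_def by (blast intro: finite_subset)

lemma hall_condition_remove_element:
  assumes hall: "hall_condition F I"
    and surplus: "\<And>K. K \<subseteq> I \<Longrightarrow> K \<noteq> {} \<Longrightarrow> K \<noteq> I \<Longrightarrow> card K < card (\<Union>(F ` K))"
    and "i0 \<in> I"
  shows "hall_condition (\<lambda>i. F i - {x}) (I - {i0})"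
proof -
  have "card K \<le> card (\<Union>i\<in>K. F i - {x})" if K: "K \<subseteq> I - {i0}" for K
  proof (cases "K = {}")
    case False
    have "K \<subseteq> I" "K \<noteq> I" using K \<open>i0 \<in> I\<close> by auto
    then have "card K < card (\<Union>(F ` K))" using surplus False by blast
    moreover have "\<Union>(F ` K) - {x} = (\<Union>i\<in>K. F i - {x})" by auto
    then have "card (\<Union>(F ` K)) - 1 \<le> card (\<Union>i\<in>K. F i - {x})"
      using diff_card_le_card_Diff[of "{x}" "\<Union>(F ` K)"] by simp
    ultimately show ?thesis by linarith
  qed simp
  then show ?thesis using hall unfolding hall_condition_def by simp
qed

lemma hall_condition_remove_tight_set:
  assumes hall: "hall_condition F I" and K0: "K0 \<subseteq> I" "card K0 = card (\<Union>(F ` K0))"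
  shows "hall_condition (\<lambda>i. F i - \<Union>(F ` K0)) (I - K0)"
proof -
  define U0 where "U0 = \<Union>(F ` K0)"
  have fin: "finite I" "\<And>i. i \<in> I \<Longrightarrow> finite (F i)"
    and card: "\<And>K. K \<subseteq> I \<Longrightarrow> card K \<le> card (\<Union>(F ` K))"
    using hall unfolding hall_condition_def by auto
  have "card K \<le> card (\<Union>i\<in>K. F i - U0)" if K: "K \<subseteq> I - K0" for K
  proof -
    have "finite K" "finite K0" using K K0 fin by (auto intro: finite_subset)
    moreover from this have "finite (\<Union>i\<in>K. F i - U0)" "finite U0"
      using K K0 fin unfolding U0_def by (auto intro!: finite_UN_I)
    ultimately have U: "card ((\<Union>i\<in>K. F i - U0) \<union> U0) = card (\<Union>i\<in>K. F i - U0) + card U0"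
      and KK0: "card (K \<union> K0) = card K + card K0"
      using K by (blast intro: card_Un_disjoint)+
    have "card K + card K0 = card (K \<union> K0)" by (rule KK0[symmetric])
    also have "card (K \<union> K0) \<le> card (\<Union>(F ` (K \<union> K0)))" using K K0 by (intro card) auto
    also have "\<Union>(F ` (K \<union> K0)) = (\<Union>i\<in>K. F i - U0) \<union> U0" unfolding U0_def by auto
    finally show ?thesis using K0(2) U unfolding U0_def by linarith
  qed
  then show ?thesis using fin unfolding hall_condition_def U0_def by auto
qed

lemma distinct_representatives_insert:
  assumes "distinct_representatives (\<lambda>i. F i - {x}) I f" "x \<in> F i0" "i0 \<notin> I"
  shows "distinct_representatives F (insert i0 I) (f(i0 := x))"
  using assms unfolding distinct_representatives_def inj_on_def by auto

lemma distinct_representatives_Un: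
  assumes f: "distinct_representatives F K f"
    and g: "distinct_representatives (\<lambda>i. F i - \<Union>(F ` K)) J g" and "K \<inter> J = {}"
  shows "distinct_representatives F (K \<union> J) (\<lambda>i. if i \<in> K then f i else g i)"
proof -
  define h where "h i = (if i \<in> K then f i else g i)" for i
  have "inj_on h K \<longleftrightarrow> inj_on f K" "inj_on h J \<longleftrightarrow> inj_on g J"
    using \<open>K \<inter> J = {}\<close> by (auto intro!: inj_on_cong simp: h_def)
  moreover have "h ` K \<subseteq> \<Union>(F ` K)" "h ` J \<inter> \<Union>(F ` K) = {}"
    using f g \<open>K \<inter> J = {}\<close> unfolding distinct_representatives_def h_def by auto
  moreover have "K - J = K" "J - K = J" using \<open>K \<inter> J = {}\<close> by auto
  ultimately have "inj_on h (K \<union> J)"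
    using f g unfolding distinct_representatives_def inj_on_Un by auto
  moreover have "\<forall>i\<in>K \<union> J. h i \<in> F i"
    using f g unfolding distinct_representatives_def h_def by auto
  ultimately show ?thesis unfolding distinct_representatives_def h_def by blast
qed

text \<open>Either every proper nonempty subfamily has surplus, and any element of any set may be
  assigned to its index, or some proper subfamily is tight and the problem splits into two.\<close>

theorem hall_marriage:
  assumes "hall_condition F I"
  shows "\<exists>f. distinct_representatives F I f"
  using assms
proof (induction "card I" arbitrary: I F rule: less_induct)
  case less
  have fin: "finite I" and card: "\<And>K. K \<subseteq> I \<Longrightarrow> card K \<le> card (\<Union>(F ` K))"
    using less.prems unfolding hall_condition_def by auto
  show ?case
  proof (cases "\<forall>K. K \<subseteq> I \<longrightarrow> K \<noteq> {} \<longrightarrow> K \<noteq> I \<longrightarrow> card K < card (\<Union>(F ` K))")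
    case surplus: True
    show ?thesis
    proof (cases "I = {}")
      case False
      then obtain i0 where "i0 \<in> I" by blast
      then have "card {i0} \<le> card (F i0)" using card[of "{i0}"] by simp
      then have "F i0 \<noteq> {}" by (intro notI) simp
      then obtain x where x: "x \<in> F i0" by blast
      have "card (I - {i0}) < card I" using fin \<open>i0 \<in> I\<close> by (rule card_Diff1_less)
      moreover have "hall_condition (\<lambda>i. F i - {x}) (I - {i0})"
        by (rule hall_condition_remove_element[OF less.prems _ \<open>i0 \<in> I\<close>]) (use surplus in blast)
      ultimately obtain f where "distinct_representatives (\<lambda>i. F i - {x}) (I - {i0}) f"
        using less.hyps by blast
      then have "distinct_representatives F (insert i0 (I - {i0})) (f(i0 := x))"
        using x by (rule distinct_representatives_insert) simp
      then show ?thesis unfolding insert_Diff[OF \<open>i0 \<in> I\<close>] by blast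
    qed (intro exI, simp add: distinct_representatives_def)
  next
    case False
    then obtain K0 where K0: "K0 \<subseteq> I" "K0 \<noteq> {}" "K0 \<noteq> I" "\<not> card K0 < card (\<Union>(F ` K0))"
      by blast
    then have tight: "card K0 = card (\<Union>(F ` K0))" using card[OF K0(1)] by simp
    have "finite K0" using K0(1) fin by (rule finite_subset)
    have "card K0 < card I" using K0 fin by (intro psubset_card_mono) auto
    moreover have "hall_condition F K0" using less.prems K0(1) by (rule hall_condition_subset)
    ultimately obtain f where f: "distinct_representatives F K0 f" using less.hyps by blast
    have "0 < card K0" using \<open>finite K0\<close> K0(2) by (simp add: card_gt_0_iff)
    moreover have "card K0 \<le> card I" using fin K0(1) by (rule card_mono)
    ultimately have "card (I - K0) < card I" using K0(1) \<open>finite K0\<close> by (simp add: card_Diff_subset)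
    moreover have "hall_condition (\<lambda>i. F i - \<Union>(F ` K0)) (I - K0)"
      using less.prems K0(1) tight by (rule hall_condition_remove_tight_set)
    ultimately obtain g where "distinct_representatives (\<lambda>i. F i - \<Union>(F ` K0)) (I - K0) g"
      using less.hyps by blast
    with f have "distinct_representatives F (K0 \<union> (I - K0)) (\<lambda>i. if i \<in> K0 then f i else g i)"
      by (rule distinct_representatives_Un) blast
    moreover have "K0 \<union> (I - K0) = I" using K0(1) by auto
    ultimately show ?thesis by auto
  qed
qed

lemma UN_restricted_sumset:
  "(\<Union>k\<in>K. restricted_sumset (A k) B S) = restricted_sumset (\<Union>k\<in>K. A k) B S"
  unfolding restricted_sumset_def by blast

lemma restricted_sumset_representatives_indices:
  assumes "distinct_representatives (\<lambda>k. restricted_sumset (a ` I k) (b ` J) S - T) K z"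
  shows "\<exists>i j. inj_on (\<lambda>k. a (i k) + b (j k)) K \<and>
    (\<forall>k\<in>K. i k \<in> I k \<and> j k \<in> J \<and> a (i k) - b (j k) \<notin> S \<and> a (i k) + b (j k) \<notin> T)"
proof -
  have "\<forall>k\<in>K. \<exists>ij. fst ij \<in> I k \<and> snd ij \<in> J \<and> a (fst ij) - b (snd ij) \<notin> S \<and>
      z k = a (fst ij) + b (snd ij) \<and> z k \<notin> T"
  proof
    fix k assume "k \<in> K"
    then obtain i j where "i \<in> I k" "j \<in> J" "a i - b j \<notin> S" "z k = a i + b j" "z k \<notin> T"
      using assms unfolding distinct_representatives_def restricted_sumset_def by blast
    then show "\<exists>ij. fst ij \<in> I k \<and> snd ij \<in> J \<and> a (fst ij) - b (snd ij) \<notin> S \<and>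
        z k = a (fst ij) + b (snd ij) \<and> z k \<notin> T"
      by (intro exI[of _ "(i, j)"]) simp
  qed
  then obtain g where g: "\<forall>k\<in>K. fst (g k) \<in> I k \<and> snd (g k) \<in> J \<and>
      a (fst (g k)) - b (snd (g k)) \<notin> S \<and> z k = a (fst (g k)) + b (snd (g k)) \<and> z k \<notin> T"
    by (metis bchoice)
  have "inj_on z K" using assms unfolding distinct_representatives_def by blast
  then have "inj_on (\<lambda>k. a (fst (g k)) + b (snd (g k))) K"
    using g inj_on_cong[of K z "\<lambda>k. a (fst (g k)) + b (snd (g k))"] by simp
  then show ?thesis using g by (intro exI[of _ "fst \<circ> g"] exI[of _ "snd \<circ> g"]) auto
qed

text \<open>The index set \<open>{2..h+2} \<union> {k+h+2 | k \<in> K}\<close> has \<open>h + 1 + |K|\<close> elements, so the counting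
  lemma yields at least \<open>|K|\<close> admissible sums: this is Hall's condition.\<close>

lemma hall_condition_restricted_sumset:
  fixes a :: "nat \<Rightarrow> 'a::field" and B S :: "'a set"
  assumes char: "CHAR('a) = p" and p: "prime p" and fin: "finite B" "finite S" and "B \<noteq> {}"
    and inj: "inj_on a {1..m}" and "card S < p" and "card S + 3 \<le> m" and "card B < p"
    and size: "m + card B \<le> p + card S + 2"
    and K: "K \<subseteq> {1..m - card S - 2}"
  shows "card K \<le> card (\<Union>k\<in>K.
    restricted_sumset (a ` ({2..card S + 2} \<union> {k + card S + 2})) B S - (+) (a 1) ` B)"
proof (cases "K = {}")
  case False
  define h where "h = card S"
  define J where "J = {2..h + 2} \<union> (\<lambda>k. k + h + 2) ` K"
  have "finite K" using K finite_subset by blast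
  have J: "J \<subseteq> {2..m}" using K \<open>card S + 3 \<le> m\<close> unfolding J_def h_def by (auto simp: subset_iff)
  have "card J = h + 1 + card K"
    unfolding J_def using \<open>finite K\<close> K by (subst card_Un_disjoint) (auto simp: card_image inj_on_def)
  moreover have "inj_on a J" using J by (intro inj_on_subset[OF inj]) auto
  ultimately have card_aJ: "card (a ` J) = h + 1 + card K" by (simp add: card_image)
  have "a 1 \<notin> a ` J"
  proof
    assume "a 1 \<in> a ` J"
    then obtain i where "i \<in> J" "a 1 = a i" by auto
    then have "1 = i" using J \<open>card S + 3 \<le> m\<close> by (intro inj_onD[OF inj]) auto
    then show False using \<open>i \<in> J\<close> J by auto
  qed
  have "card K \<le> card (restricted_sumset (a ` J) B S - (+) (a 1) ` B)"
  proof -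
    have "card K \<le> m - card S - 2" using card_mono[OF _ K] by simp
    moreover have "0 < card K" using \<open>finite K\<close> False by (simp add: card_gt_0_iff)
    ultimately have "h + 2 \<le> card (a ` J)" "card (a ` J) + card B \<le> p + h + 1"
      using size \<open>card S + 3 \<le> m\<close> unfolding card_aJ h_def by simp_all
    then show ?thesis
      using card_restricted_sumset_diff_translate[OF char p _ fin(1,2) \<open>a 1 \<notin> a ` J\<close>]
        finite_subset[OF J]
        \<open>card S < p\<close> \<open>B \<noteq> {}\<close> \<open>card B < p\<close> card_aJ unfolding h_def by simp
  qed
  also have "restricted_sumset (a ` J) B S = (\<Union>k\<in>K. restricted_sumset (a ` ({2..h + 2} \<union> {k + h + 2})) B S)"
    unfolding UN_restricted_sumset J_def using False by (intro arg_cong[of _ _ "\<lambda>A. restricted_sumset A B S"]) auto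
  finally show ?thesis unfolding h_def by simp
qed simp

theorem lemma2p2:
  fixes p \<alpha> m n :: nat and a b :: "nat \<Rightarrow> 'F::{field,finite}" and S :: "'F set"
  assumes "prime p" and "\<alpha> \<ge> 1" and "card (UNIV :: 'F set) = p ^ \<alpha>"
    and "n \<ge> 1"
    and "inj_on a {1..m}" and "inj_on b {1..n}"
    and "S \<noteq> {}" and "card S < p"
    and "m \<ge> card S + 3" and "m + n - card S - 2 \<le> p"
  shows "\<exists>i j :: nat \<Rightarrow> nat.
           inj_on (\<lambda>k. a (i k) + b (j k)) {1..m - card S - 2} \<and>
           (\<forall>k \<in> {1..m - card S - 2}.
              i k \<in> {2..card S + 2} \<union> {k + card S + 2} \<and> j k \<in> {1..n} \<and>
              a (i k) - b (j k) \<notin> S \<and>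
              a (i k) + b (j k) \<in> restricted_sumset (a ` {1..m}) (b ` {1..n}) S
                                   - {a 1 + b l | l. l \<in> {1..n}})"
proof -
  define h where "h = card S"
  define N where "N = m - h - 2"
  define B where "B = b ` {1..n}"
  define F where "F k = restricted_sumset (a ` ({2..h + 2} \<union> {k + h + 2})) B S - (+) (a 1) ` B" for k
  have char: "CHAR('F) = p" using assms(1,3) by (rule CHAR_eq_prime_of_card)
  have "card B = n" unfolding B_def using card_image[OF assms(6)] by simp
  then have "card K \<le> card (\<Union>(F ` K))" if "K \<subseteq> {1..N}" for K
    using that assms(4-10) unfolding F_def N_def h_def B_def
    by (intro hall_condition_restricted_sumset[OF char \<open>prime p\<close>]) auto
  then have "\<exists>f. distinct_representatives F {1..N} f"
    by (intro hall_marriage) (simp add: hall_condition_def)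
  then obtain f where "distinct_representatives F {1..N} f" ..
  then have "\<exists>i j. inj_on (\<lambda>k. a (i k) + b (j k)) {1..N} \<and> (\<forall>k\<in>{1..N}.
      i k \<in> {2..h + 2} \<union> {k + h + 2} \<and> j k \<in> {1..n} \<and> a (i k) - b (j k) \<notin> S \<and>
      a (i k) + b (j k) \<notin> (+) (a 1) ` B)"
    unfolding F_def B_def by (rule restricted_sumset_representatives_indices)
  moreover have "{2..h + 2} \<union> {k + h + 2} \<subseteq> {1..m}" if "k \<in> {1..N}" for k
    using that unfolding N_def by auto
  ultimately show ?thesis
    unfolding N_def h_def B_def restricted_sumset_def by blast
qed

end
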